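(* Let $\Lambda$ be a row-finite source-free $k$-graph. In any $\Lambda$-semibranching function system on a measure space $(X,\mu)$, if $(\lambda, \nu)$ is a periodic pair, then $\mu (R_\lambda \,\Delta\, R_\nu) = 0$.
   Context: A $k$-graph is a countable small category $\Lambda$ with a functor $d:\Lambda\to\mathbb{N}^k$ with unique factorization; vertices $\Lambda^0$, range/source $r,s$; row-finite/source-free: paths of a given degree and range form a finite/nonempty set. $\Lambda^\infty$ is the set of infinite paths, $Z(v)$ those with range $v$, and $\lambda x$ denotes prefixing of $\lambda$ to $x\in Z(s(\lambda))$. A pair $(\lambda,\nu)\in\Lambda\times\Lambda$ is periodic if $s(\lambda)=s(\nu)$ and $\lambda x=\nu x$ for all $x\in Z(s(\lambda))$. A $\Lambda$-semibranching function system on $(X,\mu)$: measurable $D_\lambda$, prefixing maps $\tau_\lambda:D_\lambda\to X$, $R_\lambda=\tau_\lambda(D_\lambda)$, coding maps $\tau^m$, such that for each $m\in\mathbb{N}^k$ $\{\tau_\lambda:d(\lambda)=m\}$ is a semibranching function system with coding map $\tau^m$ ($0<\mu(D_\lambda)<\infty$, $\mu(R_\lambda)<\infty$, $\mu(R_\lambda\cap R_\eta)=0$ for distinct $\lambda,\eta$ of degree $m$, $\mu(X\setminus\bigcup_{d(\lambda)=m}R_\lambda)=0$, $d(\mu\circ\tau_\lambda)/d\mu>0$ a.e. on $D_\lambda$, $\tau^m\circ\tau_\lambda=\mathrm{id}$); $\tau_v=\mathrm{id}$ for $v\in\Lambda^0$; for $\nu\in s(\lambda)\Lambda$, $R_\nu\subseteq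 D_\lambda$ a.e. and $\tau_\lambda\tau_\nu=\tau_{\lambda\nu}$ a.e.; $\tau^m\tau^n=\tau^{m+n}$. *)

theory Defs
  imports "HOL-Analysis.Analysis"
begin

text \<open>Degrees: elements of N^k are functions 'k => nat for a finite index type 'k
 (k = CARD('k)).  Pointwise sum, difference and zero.\<close>

definition dadd :: "('k \<Rightarrow> nat) \<Rightarrow> ('k \<Rightarrow> nat) \<Rightarrow> ('k \<Rightarrow> nat)" where
  "dadd m n = (\<lambda>i. m i + n i)"

definition dsub :: "('k \<Rightarrow> nat) \<Rightarrow> ('k \<Rightarrow> nat) \<Rightarrow> ('k \<Rightarrow> nat)" where
  "dsub n m = (\<lambda>i. n i - m i)"

definition dzero :: "'k \<Rightarrow> nat" where
  "dzero = (\<lambda>_. 0)"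

text \<open>A small category given by its set of morphisms, the subset of identity morphisms
 (vertices), range, source, composition (comp lam mu = lam mu, defined when s lam = r mu)
 and the degree functor.\<close>

record ('a, 'k) kg =
  arr  :: "'a set"
  vert :: "'a set"
  rng  :: "'a \<Rightarrow> 'a"
  src  :: "'a \<Rightarrow> 'a"
  comp :: "'a \<Rightarrow> 'a \<Rightarrow> 'a"
  deg  :: "'a \<Rightarrow> 'k \<Rightarrow> nat"

definition kgraph :: "('a, 'k::finite) kg \<Rightarrow> bool" where
  "kgraph G \<longleftrightarrow>
    countable (arr G) \<and> vert G \<subseteq> arr G \<and>
    (\<forall>l\<in>arr G. rng G l \<in> vert G \<and> src G l \<in> vert G) \<and>
    (\<forall>v\<in>vert G. rng G v = v \<and> src G v = v) \<and>
    (\<forall>l\<in>arr G. \<forall>m\<in>arr G. src G l = rng G m \<longrightarrow>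
        comp G l m \<in> arr G \<and> rng G (comp G l m) = rng G l \<and> src G (comp G l m) = src G m) \<and>
    (\<forall>l\<in>arr G. comp G (rng G l) l = l \<and> comp G l (src G l) = l) \<and>
    (\<forall>l\<in>arr G. \<forall>m\<in>arr G. \<forall>n\<in>arr G. src G l = rng G m \<and> src G m = rng G n \<longrightarrow>
        comp G (comp G l m) n = comp G l (comp G m n)) \<and>
    (\<forall>l\<in>arr G. \<forall>m\<in>arr G. src G l = rng G m \<longrightarrow>
        deg G (comp G l m) = dadd (deg G l) (deg G m)) \<and>
    (\<forall>l\<in>arr G. \<forall>m n. deg G l = dadd m n \<longrightarrow>
        (\<exists>!p. fst p \<in> arr G \<and> snd p \<in> arr G \<and> src G (fst p) = rng G (snd p) \<and>
              deg G (fst p) = m \<and> deg G (snd p) = n \<and> comp G (fst p) (snd p) = l))"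

definition row_finite :: "('a, 'k) kg \<Rightarrow> bool" where
  "row_finite G \<longleftrightarrow> (\<forall>v\<in>vert G. \<forall>m. finite {l\<in>arr G. rng G l = v \<and> deg G l = m})"

definition source_free :: "('a, 'k) kg \<Rightarrow> bool" where
  "source_free G \<longleftrightarrow> (\<forall>v\<in>vert G. \<forall>m. {l\<in>arr G. rng G l = v \<and> deg G l = m} \<noteq> {})"

text \<open>Infinite paths: degree-preserving functors from Omega_k = {(m,n). m \<le> n} to Lambda
 (normalised to undefined off the domain).\<close>

definition inf_paths :: "('a, 'k) kg \<Rightarrow> (('k \<Rightarrow> nat) \<Rightarrow> ('k \<Rightarrow> nat) \<Rightarrow> 'a) set" where
  "inf_paths G = {x.
     (\<forall>m n. m \<le> n \<longrightarrow> x m n \<in> arr G \<and> deg G (x m n) = dsub n m) \<and>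
     (\<forall>m. x m m \<in> vert G) \<and>
     (\<forall>m n p. m \<le> n \<and> n \<le> p \<longrightarrow>
        src G (x m n) = rng G (x n p) \<and> comp G (x m n) (x n p) = x m p) \<and>
     (\<forall>m n. \<not> m \<le> n \<longrightarrow> x m n = undefined)}"

definition Zv :: "('a, 'k) kg \<Rightarrow> 'a \<Rightarrow> (('k \<Rightarrow> nat) \<Rightarrow> ('k \<Rightarrow> nat) \<Rightarrow> 'a) set" where
  "Zv G v = {x \<in> inf_paths G. x dzero dzero = v}"

definition prefix :: "('a, 'k) kg \<Rightarrow> 'a \<Rightarrow> (('k \<Rightarrow> nat) \<Rightarrow> ('k \<Rightarrow> nat) \<Rightarrow> 'a)
    \<Rightarrow> (('k \<Rightarrow> nat) \<Rightarrow> ('k \<Rightarrow> nat) \<Rightarrow> 'a)" where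
  "prefix G l x = (THE y. y \<in> inf_paths G \<and> y dzero (deg G l) = l \<and>
      (\<forall>m n. m \<le> n \<longrightarrow> y (dadd (deg G l) m) (dadd (deg G l) n) = x m n))"

definition periodic_pair :: "('a, 'k) kg \<Rightarrow> 'a \<Rightarrow> 'a \<Rightarrow> bool" where
  "periodic_pair G l n \<longleftrightarrow> l \<in> arr G \<and> n \<in> arr G \<and> src G l = src G n \<and>
     (\<forall>x\<in>Zv G (src G l). prefix G l x = prefix G n x)"

definition Rset :: "('a \<Rightarrow> 'x set) \<Rightarrow> ('a \<Rightarrow> 'x \<Rightarrow> 'x) \<Rightarrow> 'a \<Rightarrow> 'x set" where
  "Rset D tau l = tau l ` D l"

definition symdiff :: "'x set \<Rightarrow> 'x set \<Rightarrow> 'x set" where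
  "symdiff A B = (A - B) \<union> (B - A)"

text \<open>The Radon--Nikodym condition d(mu o tau_l)/d mu > 0 a.e. on D_l
 is written out: mu o tau_l has a density f w.r.t. mu on D_l with f > 0 a.e. on D_l.\<close>

definition sbfs_deg :: "'x measure \<Rightarrow> ('a, 'k) kg \<Rightarrow> ('a \<Rightarrow> 'x set) \<Rightarrow> ('a \<Rightarrow> 'x \<Rightarrow> 'x)
    \<Rightarrow> (('k \<Rightarrow> nat) \<Rightarrow> 'x \<Rightarrow> 'x) \<Rightarrow> ('k \<Rightarrow> nat) \<Rightarrow> bool" where
  "sbfs_deg M G D tau taum m \<longleftrightarrow>
    (\<forall>l\<in>arr G. deg G l = m \<longrightarrow>
       D l \<in> sets M \<and> 0 < emeasure M (D l) \<and> emeasure M (D l) < \<infinity> \<and>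
       tau l \<in> measurable (restrict_space M (D l)) M \<and>
       (\<forall>A\<in>sets M. A \<subseteq> D l \<longrightarrow> tau l ` A \<in> sets M) \<and>
       emeasure M (Rset D tau l) < \<infinity> \<and>
       (\<exists>f\<in>borel_measurable M. (AE x in M. x \<in> D l \<longrightarrow> f x > 0) \<and>
          (\<forall>A\<in>sets M. A \<subseteq> D l \<longrightarrow> emeasure M (tau l ` A) = set_nn_integral M A f)) \<and>
       (\<forall>x\<in>D l. taum m (tau l x) = x)) \<and>
    (\<forall>l\<in>arr G. \<forall>n\<in>arr G. deg G l = m \<and> deg G n = m \<and> l \<noteq> n \<longrightarrow>
       emeasure M (Rset D tau l \<inter> Rset D tau n) = 0) \<and>
    emeasure M (space M - (\<Union>l\<in>{l\<in>arr G. deg G l = m}. Rset D tau l)) = 0"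

definition lambda_sbfs :: "'x measure \<Rightarrow> ('a, 'k) kg \<Rightarrow> ('a \<Rightarrow> 'x set) \<Rightarrow> ('a \<Rightarrow> 'x \<Rightarrow> 'x)
    \<Rightarrow> (('k \<Rightarrow> nat) \<Rightarrow> 'x \<Rightarrow> 'x) \<Rightarrow> bool" where
  "lambda_sbfs M G D tau taum \<longleftrightarrow>
    (\<forall>m. sbfs_deg M G D tau taum m) \<and>
    (\<forall>v\<in>vert G. \<forall>x\<in>D v. tau v x = x) \<and>
    (\<forall>l\<in>arr G. \<forall>n\<in>arr G. rng G n = src G l \<longrightarrow>
       emeasure M (Rset D tau n - D l) = 0 \<and>
       emeasure M (symdiff (D n) (D (comp G l n))) = 0 \<and>
       (AE x in M. x \<in> D n \<longrightarrow> tau l (tau n x) = tau (comp G l n) x)) \<and>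
    (\<forall>m n. \<forall>x\<in>space M. taum m (taum n x) = taum (dadd m n) x)"

end

theory Submission
  imports Defs
begin

text \<open>Let \<open>(\<lambda>, \<nu>)\<close> be periodic. Every arrow \<open>e\<close> with \<open>r(e) = s(\<lambda>)\<close> and
  \<open>d(e) = d(\<nu>)\<close> extends to an infinite path \<open>x \<in> Z(s(\<lambda>))\<close>; comparing \<open>\<lambda>x = \<nu>x\<close>
  at degree \<open>d(\<lambda>) + d(\<nu>)\<close> gives \<open>\<lambda>e = \<nu>e'\<close> with \<open>e' = x(0, d(\<lambda>))\<close>.
  Almost every point of \<open>D(\<lambda>)\<close> lies in \<open>R(s(\<lambda>))\<close> and hence, because the \<open>R(e)\<close> with
  \<open>d(e) = d(\<nu>)\<close> cover \<open>X\<close>, \<open>R(e) \<subseteq> R(r(e))\<close> and ranges of distinct vertices are almost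
  disjoint, in some \<open>R(e)\<close> of this kind, which \<open>\<tau>\<^sub>\<lambda>\<close> maps into
  \<open>R(\<lambda>e) = R(\<nu>e') \<subseteq> R(\<nu>)\<close>. Since \<open>\<tau>\<^sub>\<lambda>\<close> maps null subsets of \<open>D(\<lambda>)\<close> to null
  sets, \<open>R(\<lambda>) \<subseteq> R(\<nu>)\<close> up to a null set, and the claim follows by symmetry.\<close>

lemma dadd_dzero [simp]: "dadd m dzero = m" "dadd dzero m = m"
  by (auto simp: dadd_def dzero_def)

lemma dsub_dzero [simp]: "dsub m dzero = m"
  by (auto simp: dsub_def dzero_def)

lemma dsub_self [simp]: "dsub m m = dzero"
  by (auto simp: dsub_def dzero_def)

lemma dsub_dadd [simp]: "dsub (dadd m n) m = n"
  by (auto simp: dadd_def dsub_def)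

lemma dzero_le [simp]: "dzero \<le> m"
  by (auto simp: dzero_def le_fun_def)

lemma dadd_upper [simp]: "m \<le> dadd m n" "n \<le> dadd m n"
  by (auto simp: dadd_def le_fun_def)

lemma dadd_left_mono: "m \<le> n \<Longrightarrow> dadd p m \<le> dadd p n"
  by (auto simp: dadd_def le_fun_def)

lemma dadd_dsub_cancel: "m \<le> n \<Longrightarrow> dadd m (dsub n m) = n"
  by (auto simp: dadd_def dsub_def le_fun_def fun_eq_iff)

lemma dadd_commute: "dadd m n = dadd n m"
  by (auto simp: dadd_def)

lemma dadd_idem_imp_dzero: "dadd m m = m \<Longrightarrow> m = dzero"
  by (auto simp: dadd_def dzero_def fun_eq_iff)

locale k_graph =
  fixes G :: "('a, 'k::finite) kg"
  assumes kgraph: "kgraph G"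
begin

lemma countable_arr: "countable (arr G)"
  using kgraph unfolding kgraph_def by blast

lemma vert_subset_arr: "vert G \<subseteq> arr G"
  using kgraph unfolding kgraph_def by blast

lemma vert_in_arr: "v \<in> vert G \<Longrightarrow> v \<in> arr G"
  using vert_subset_arr by blast

lemma rng_in_vert: "l \<in> arr G \<Longrightarrow> rng G l \<in> vert G"
  using kgraph unfolding kgraph_def by blast

lemma src_in_vert: "l \<in> arr G \<Longrightarrow> src G l \<in> vert G"
  using kgraph unfolding kgraph_def by blast

lemma rng_vert [simp]: "v \<in> vert G \<Longrightarrow> rng G v = v"
  and src_vert [simp]: "v \<in> vert G \<Longrightarrow> src G v = v"
  using kgraph unfolding kgraph_def by blast+

lemma comp_in_arr: "l \<in> arr G \<Longrightarrow> m \<in> arr G \<Longrightarrow> src G l = rng G m \<Longrightarrow> comp G l m \<in> arr G"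
  and rng_comp: "l \<in> arr G \<Longrightarrow> m \<in> arr G \<Longrightarrow> src G l = rng G m \<Longrightarrow> rng G (comp G l m) = rng G l"
  and src_comp: "l \<in> arr G \<Longrightarrow> m \<in> arr G \<Longrightarrow> src G l = rng G m \<Longrightarrow> src G (comp G l m) = src G m"
  using kgraph unfolding kgraph_def by blast+

lemma comp_rng_left [simp]: "l \<in> arr G \<Longrightarrow> comp G (rng G l) l = l"
  and comp_src_right [simp]: "l \<in> arr G \<Longrightarrow> comp G l (src G l) = l"
  using kgraph unfolding kgraph_def by blast+

lemma comp_assoc:
  "l \<in> arr G \<Longrightarrow> m \<in> arr G \<Longrightarrow> n \<in> arr G \<Longrightarrow> src G l = rng G m \<Longrightarrow> src G m = rng G n \<Longrightarrow>
    comp G (comp G l m) n = comp G l (comp G m n)"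
  using kgraph unfolding kgraph_def by blast

lemma deg_comp:
  "l \<in> arr G \<Longrightarrow> m \<in> arr G \<Longrightarrow> src G l = rng G m \<Longrightarrow> deg G (comp G l m) = dadd (deg G l) (deg G m)"
  using kgraph unfolding kgraph_def by blast

lemma unique_factorization:
  "w \<in> arr G \<Longrightarrow> deg G w = dadd p q \<Longrightarrow>
    \<exists>!uv. fst uv \<in> arr G \<and> snd uv \<in> arr G \<and> src G (fst uv) = rng G (snd uv) \<and>
      deg G (fst uv) = p \<and> deg G (snd uv) = q \<and> comp G (fst uv) (snd uv) = w"
  using kgraph unfolding kgraph_def by blast

lemma deg_vert: assumes v: "v \<in> vert G" shows "deg G v = dzero"
proof -
  have "comp G v v = v"
    using comp_rng_left[OF vert_in_arr[OF v]] v by simp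
  then have "deg G v = dadd (deg G v) (deg G v)"
    using deg_comp[OF vert_in_arr[OF v] vert_in_arr[OF v]] v by simp
  then show ?thesis
    by (metis dadd_idem_imp_dzero)
qed

lemma vert_if_deg_dzero: assumes l: "l \<in> arr G" and d: "deg G l = dzero" shows "l \<in> vert G"
proof -
  let ?P = "\<lambda>uv. fst uv \<in> arr G \<and> snd uv \<in> arr G \<and> src G (fst uv) = rng G (snd uv) \<and>
    deg G (fst uv) = dzero \<and> deg G (snd uv) = dzero \<and> comp G (fst uv) (snd uv) = l"
  have "\<exists>!uv. ?P uv"
    using unique_factorization[OF l, of dzero dzero] d by simp
  moreover have "?P (rng G l, l)" "?P (l, src G l)"
    using l d rng_in_vert src_in_vert vert_in_arr deg_vert by auto
  ultimately have "(rng G l, l) = (l, src G l)"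
    by blast
  then show ?thesis
    using src_in_vert[OF l] by simp
qed

text \<open>In the paper's notation, \<open>init_seg w p = w(0, p)\<close> and \<open>final_seg w p = w(p, d(w))\<close>.\<close>

definition factorization :: "'a \<Rightarrow> ('k \<Rightarrow> nat) \<Rightarrow> 'a \<times> 'a" where
  "factorization w p = (THE uv. fst uv \<in> arr G \<and> snd uv \<in> arr G \<and> src G (fst uv) = rng G (snd uv) \<and>
     deg G (fst uv) = p \<and> deg G (snd uv) = dsub (deg G w) p \<and> comp G (fst uv) (snd uv) = w)"

definition init_seg :: "'a \<Rightarrow> ('k \<Rightarrow> nat) \<Rightarrow> 'a" where
  "init_seg w p = fst (factorization w p)"

definition final_seg :: "'a \<Rightarrow> ('k \<Rightarrow> nat) \<Rightarrow> 'a" where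
  "final_seg w p = snd (factorization w p)"

lemma seg_factorization:
  assumes w: "w \<in> arr G" and p: "p \<le> deg G w"
  shows "init_seg w p \<in> arr G" "final_seg w p \<in> arr G"
    and "src G (init_seg w p) = rng G (final_seg w p)"
    and "deg G (init_seg w p) = p" "deg G (final_seg w p) = dsub (deg G w) p"
    and "comp G (init_seg w p) (final_seg w p) = w"
proof -
  have "deg G w = dadd p (dsub (deg G w) p)"
    using dadd_dsub_cancel[OF p] by simp
  from theI'[OF unique_factorization[OF w this]]
  show "init_seg w p \<in> arr G" "final_seg w p \<in> arr G"
    and "src G (init_seg w p) = rng G (final_seg w p)"
    and "deg G (init_seg w p) = p" "deg G (final_seg w p) = dsub (deg G w) p"
    and "comp G (init_seg w p) (final_seg w p) = w"
    unfolding init_seg_def final_seg_def factorization_def by auto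
qed

lemma segs_comp_deg:
  assumes u: "u \<in> arr G" and v: "v \<in> arr G" and uv: "src G u = rng G v"
  shows "init_seg (comp G u v) (deg G u) = u" and "final_seg (comp G u v) (deg G u) = v"
proof -
  let ?w = "comp G u v"
  have dw: "deg G ?w = dadd (deg G u) (deg G v)"
    using deg_comp[OF u v uv] .
  have "factorization ?w (deg G u) = (u, v)"
    unfolding factorization_def dw dsub_dadd
    by (rule the1_equality[OF unique_factorization[OF comp_in_arr[OF u v uv] dw]]) (use u v uv in simp)
  then show "init_seg ?w (deg G u) = u" "final_seg ?w (deg G u) = v"
    unfolding init_seg_def final_seg_def by simp_all
qed

lemma src_final_seg: "w \<in> arr G \<Longrightarrow> p \<le> deg G w \<Longrightarrow> src G (final_seg w p) = src G w"
  by (metis seg_factorization(1,2,3,6) src_comp)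

lemma final_seg_dzero [simp]: "w \<in> arr G \<Longrightarrow> final_seg w dzero = w"
  using segs_comp_deg(2)[of "rng G w" w] rng_in_vert vert_in_arr deg_vert by simp

lemma init_seg_deg [simp]: "w \<in> arr G \<Longrightarrow> init_seg w (deg G w) = w"
  using segs_comp_deg(1)[of w "src G w"] src_in_vert vert_in_arr by simp

lemma init_seg_init_seg:
  assumes w: "w \<in> arr G" and pq: "p \<le> q" and q: "q \<le> deg G w"
  shows "init_seg (init_seg w q) p = init_seg w p"
proof -
  let ?u = "init_seg w q" and ?v = "final_seg w q"
  note u = seg_factorization[OF w q]
  have p: "p \<le> deg G ?u"
    using u pq by simp
  note u' = seg_factorization[OF u(1) p]
  have src_u': "src G (final_seg ?u p) = rng G ?v"
    using src_final_seg[OF u(1) p] u by simp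
  have "w = comp G (comp G (init_seg ?u p) (final_seg ?u p)) ?v"
    using u u' by simp
  also have "\<dots> = comp G (init_seg ?u p) (comp G (final_seg ?u p) ?v)"
    using comp_assoc[OF u'(1,2) u(2) u'(3) src_u'] .
  finally have "init_seg w (deg G (init_seg ?u p)) = init_seg ?u p"
    using segs_comp_deg(1)[OF u'(1) comp_in_arr[OF u'(2) u(2) src_u']]
      rng_comp[OF u'(2) u(2) src_u'] u' by simp
  then show ?thesis
    using u' by simp
qed

lemma init_seg_comp:
  assumes u: "u \<in> arr G" and v: "v \<in> arr G" and uv: "src G u = rng G v" and p: "p \<le> deg G u"
  shows "init_seg (comp G u v) p = init_seg u p"
  using init_seg_init_seg[OF comp_in_arr[OF u v uv] p] deg_comp[OF u v uv] segs_comp_deg[OF u v uv]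
  by simp

lemma inf_path_arr: "x \<in> inf_paths G \<Longrightarrow> m \<le> n \<Longrightarrow> x m n \<in> arr G"
  and inf_path_deg: "x \<in> inf_paths G \<Longrightarrow> m \<le> n \<Longrightarrow> deg G (x m n) = dsub n m"
  and inf_path_vert: "x \<in> inf_paths G \<Longrightarrow> x m m \<in> vert G"
  and inf_path_src: "x \<in> inf_paths G \<Longrightarrow> m \<le> n \<Longrightarrow> n \<le> p \<Longrightarrow> src G (x m n) = rng G (x n p)"
  and inf_path_comp: "x \<in> inf_paths G \<Longrightarrow> m \<le> n \<Longrightarrow> n \<le> p \<Longrightarrow> comp G (x m n) (x n p) = x m p"
  and inf_path_undefined: "x \<in> inf_paths G \<Longrightarrow> \<not> m \<le> n \<Longrightarrow> x m n = undefined"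
  unfolding inf_paths_def by blast+

lemma rng_inf_path: "x \<in> inf_paths G \<Longrightarrow> rng G (x dzero q) = x dzero dzero"
  using inf_path_src[of x dzero dzero q] inf_path_vert[of x dzero] by simp

lemma inf_path_factorization:
  assumes x: "x \<in> inf_paths G" and pq: "p \<le> q"
  shows "init_seg (x dzero q) p = x dzero p" and "final_seg (x dzero q) p = x p q"
  using segs_comp_deg[OF inf_path_arr[OF x, of dzero p] inf_path_arr[OF x pq] inf_path_src[OF x _ pq]]
    inf_path_comp[OF x _ pq] inf_path_deg[OF x, of dzero p] by simp_all

lemma inf_paths_eqI:
  assumes x: "x \<in> inf_paths G" and y: "y \<in> inf_paths G"
    and cofinal: "\<And>q. \<exists>Q\<ge>q. x dzero Q = y dzero Q"
  shows "x = y"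
proof (intro ext)
  fix p q
  show "x p q = y p q"
  proof (cases "p \<le> q")
    case False
    then show ?thesis
      using inf_path_undefined x y by metis
  next
    case True
    obtain Q where Q: "q \<le> Q" "x dzero Q = y dzero Q"
      using cofinal by blast
    then have "x dzero q = y dzero q"
      using inf_path_factorization(1) x y by metis
    then show ?thesis
      using inf_path_factorization(2) x y True by metis
  qed
qed

lemma coherent_family_inf_path:
  assumes F: "\<And>q. F q \<in> arr G" "\<And>q. deg G (F q) = q"
    and coherent: "\<And>q q'. q \<le> q' \<Longrightarrow> init_seg (F q') q = F q"
  shows "\<exists>x\<in>inf_paths G. \<forall>q. x dzero q = F q"
proof
  define x where "x p q = (if p \<le> q then final_seg (F q) p else undefined)" for p q
  show "\<forall>q. x dzero q = F q"
    using F by (simp add: x_def)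
  have seg: "x m n \<in> arr G" "deg G (x m n) = dsub n m" if "m \<le> n" for m n
    using seg_factorization[of "F n" m] F that by (simp_all add: x_def)
  have comp_seg: "src G (x m n) = rng G (x n p) \<and> comp G (x m n) (x n p) = x m p"
    if mn: "m \<le> n" and np: "n \<le> p" for m n p
  proof -
    let ?a = "final_seg (F n) m" and ?b = "final_seg (F p) n"
    note A = seg_factorization[of "F n" m] and B = seg_factorization[of "F p" n]
    have Fn: "F n = init_seg (F p) n" and Fm: "F m = init_seg (F n) m"
      using coherent mn np by simp_all
    have "src G ?a = src G (F n)"
      using src_final_seg[of "F n" m] F mn by simp
    also have "\<dots> = rng G ?b"
      using B(3) F np Fn by simp
    finally have src_a: "src G ?a = rng G ?b" .
    have "F p = comp G (comp G (F m) ?a) ?b"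
      using A B F mn np Fm Fn by simp
    also have "\<dots> = comp G (F m) (comp G ?a ?b)"
      using comp_assoc[OF A(1,2) B(2) A(3) src_a] F mn np Fm by simp
    finally have "final_seg (F p) (deg G (F m)) = comp G ?a ?b"
      using segs_comp_deg(2)[of "F m" "comp G ?a ?b"] comp_in_arr[OF A(2) B(2) src_a]
        rng_comp[OF A(2) B(2) src_a] A F mn np Fm by simp
    then show ?thesis
      using mn np order_trans[OF mn np] src_a F by (simp add: x_def)
  qed
  have "x m m \<in> vert G" for m
    using seg[of m m] vert_if_deg_dzero by simp
  then show "x \<in> inf_paths G"
    unfolding inf_paths_def using seg comp_seg by (auto simp: x_def)
qed

lemma cofinal_family_inf_path:
  assumes W: "\<And>q. W q \<in> arr G" "\<And>q. q \<le> deg G (W q)"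
    and coherent: "\<And>q q'. q \<le> q' \<Longrightarrow> init_seg (W q') q = init_seg (W q) q"
  shows "\<exists>x\<in>inf_paths G. \<forall>q. x dzero q = init_seg (W q) q"
proof (rule coherent_family_inf_path)
  show "init_seg (W q) q \<in> arr G" "deg G (init_seg (W q) q) = q" for q
    using seg_factorization W by simp_all
  show "init_seg (init_seg (W q') q') q = init_seg (W q) q" if "q \<le> q'" for q q'
    using init_seg_init_seg[OF W(1) that W(2)] coherent[OF that] by simp
qed

lemma extension_sequence:
  assumes sf: "source_free G" and e: "e \<in> arr G"
  obtains c where "c 0 = e" "\<And>j. c j \<in> arr G" "\<And>j. deg G (c j) = dadd (deg G e) (\<lambda>_. j)"
    and "\<And>j j'. j \<le> j' \<Longrightarrow> init_seg (c j') (deg G (c j)) = c j"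
proof -
  have "\<forall>a\<in>arr G. \<exists>z. z \<in> arr G \<and> rng G z = src G a \<and> deg G z = (\<lambda>_. 1)"
    using sf src_in_vert unfolding source_free_def by blast
  then obtain z where z: "\<And>a. a \<in> arr G \<Longrightarrow> z a \<in> arr G \<and> rng G (z a) = src G a \<and> deg G (z a) = (\<lambda>_. 1)"
    by (auto dest!: bchoice)
  define c where "c j = ((\<lambda>a. comp G a (z a)) ^^ j) e" for j
  have c_Suc: "c (Suc j) = comp G (c j) (z (c j))" for j
    by (simp add: c_def)
  have c: "c j \<in> arr G \<and> deg G (c j) = dadd (deg G e) (\<lambda>_. j)" for j
  proof (induction j)
    case 0
    then show ?case
      using e by (simp add: c_def dadd_def)
  next
    case (Suc j)
    then show ?case
      using z[of "c j"] comp_in_arr deg_comp by (auto simp: c_Suc dadd_def)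
  qed
  have c_init: "init_seg (c j') (deg G (c j)) = c j" if "j \<le> j'" for j j'
    using that
  proof (induction j' rule: dec_induct)
    case base
    then show ?case
      by (metis c init_seg_deg)
  next
    case (step i)
    have "deg G (c j) \<le> deg G (c i)"
      using c step(1) by (auto simp: dadd_def le_fun_def)
    then show ?case
      using init_seg_comp[of "c i" "z (c i)"] z[of "c i"] c step(3) by (simp add: c_Suc)
  qed
  show thesis
  proof (rule that[of c])
    show "c 0 = e"
      by (simp add: c_def)
  qed (use c c_init in auto)
qed

lemma extend_to_inf_path:
  assumes sf: "source_free G" and e: "e \<in> arr G"
  shows "\<exists>x\<in>inf_paths G. x dzero (deg G e) = e"
proof -
  obtain c where c0: "c 0 = e" and c: "\<And>j. c j \<in> arr G" "\<And>j. deg G (c j) = dadd (deg G e) (\<lambda>_. j)"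
    and c_init: "\<And>j j'. j \<le> j' \<Longrightarrow> init_seg (c j') (deg G (c j)) = c j"
    using extension_sequence[OF sf e] by blast
  define W where "W q = c (sum q UNIV)" for q :: "'k \<Rightarrow> nat"
  have W_deg: "q \<le> deg G (W q)" for q
    using member_le_sum[of _ UNIV q] c(2) by (auto simp: W_def dadd_def le_fun_def trans_le_add2)
  have W_arr: "W q \<in> arr G" for q
    by (simp add: W_def c(1))
  have W_coh: "init_seg (W q') q = init_seg (W q) q" if "q \<le> q'" for q q'
  proof -
    have S: "sum q UNIV \<le> sum q' UNIV"
      using that by (auto simp: le_fun_def intro: sum_mono)
    then have "deg G (W q) \<le> deg G (W q')"
      using c(2) by (auto simp: W_def dadd_def le_fun_def)
    then have "init_seg (W q') q = init_seg (init_seg (W q') (deg G (W q))) q"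
      using init_seg_init_seg[OF W_arr[of q'] W_deg[of q]] by simp
    also have "\<dots> = init_seg (W q) q"
      using c_init[OF S] by (simp add: W_def)
    finally show ?thesis .
  qed
  have "\<exists>x\<in>inf_paths G. \<forall>q. x dzero q = init_seg (W q) q"
    by (rule cofinal_family_inf_path[OF W_arr W_deg W_coh])
  then obtain x where x: "x \<in> inf_paths G" "\<And>q. x dzero q = init_seg (W q) q"
    by blast
  have "x dzero (deg G e) = e"
    using x(2) c_init[of 0] c0 by (simp add: W_def)
  then show ?thesis
    using x(1) by blast
qed

lemma prefixed_inf_path_init:
  assumes y: "y \<in> inf_paths G" and y_l: "y dzero (deg G l) = l"
    and y_x: "\<forall>m n. m \<le> n \<longrightarrow> y (dadd (deg G l) m) (dadd (deg G l) n) = x m n"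
  shows "y dzero (dadd (deg G l) q) = comp G l (x dzero q)"
  using inf_path_comp[OF y, of dzero "deg G l" "dadd (deg G l) q"] y_l y_x[rule_format, of dzero q]
  by simp

lemma ex1_prefixed_inf_path:
  assumes l: "l \<in> arr G" and x: "x \<in> inf_paths G" and x0: "x dzero dzero = src G l"
  shows "\<exists>!y. y \<in> inf_paths G \<and> y dzero (deg G l) = l \<and>
    (\<forall>m n. m \<le> n \<longrightarrow> y (dadd (deg G l) m) (dadd (deg G l) n) = x m n)"
proof -
  let ?a = "deg G l"
  define W where "W q = comp G l (x dzero q)" for q
  have src_l: "src G l = rng G (x dzero q)" for q
    using rng_inf_path[OF x] x0 by simp
  have W: "W q \<in> arr G" "deg G (W q) = dadd ?a q" for q
    unfolding W_def using comp_in_arr deg_comp l inf_path_arr[OF x] inf_path_deg[OF x] src_l by simp_all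
  have W_comp: "W q' = comp G (W q) (x q q')" "src G (W q) = rng G (x q q')" if "q \<le> q'" for q q'
    unfolding W_def
    using comp_assoc[OF l inf_path_arr[OF x] inf_path_arr[OF x that] src_l inf_path_src[OF x _ that]]
      inf_path_comp[OF x _ that] src_comp[OF l inf_path_arr[OF x] src_l] inf_path_src[OF x _ that]
    by simp_all
  have W_init: "init_seg (W q') q = init_seg (W q) q" if "q \<le> q'" for q q'
    using W_comp[OF that] init_seg_comp[OF W(1) inf_path_arr[OF x that]] W(2) by simp
  have "\<exists>y\<in>inf_paths G. \<forall>q. y dzero q = init_seg (W q) q"
    by (rule cofinal_family_inf_path[OF W(1) _ W_init]) (simp add: W(2))
  then obtain y where y: "y \<in> inf_paths G" "\<And>q. y dzero q = init_seg (W q) q"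
    by blast
  have "y dzero ?a = l"
    using y(2) segs_comp_deg(1)[OF l inf_path_arr[OF x] src_l] by (simp add: W_def)
  moreover have "y (dadd ?a m) (dadd ?a n) = x m n" if mn: "m \<le> n" for m n
  proof -
    have n_le: "n \<le> dadd ?a n"
      by simp
    have "y dzero (dadd ?a n) = init_seg (comp G (W n) (x n (dadd ?a n))) (deg G (W n))"
      using y(2) W_comp(1)[OF n_le] W(2) by simp
    also have "\<dots> = W n"
      using segs_comp_deg(1)[OF W(1) inf_path_arr[OF x n_le] W_comp(2)[OF n_le]] .
    also have "\<dots> = comp G (W m) (x m n)"
      using W_comp(1)[OF mn] .
    finally have y_n: "y dzero (dadd ?a n) = comp G (W m) (x m n)" .
    have "y (dadd ?a m) (dadd ?a n) = final_seg (y dzero (dadd ?a n)) (dadd ?a m)"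
      using inf_path_factorization(2)[OF y(1) dadd_left_mono[OF mn, of ?a]] by simp
    also have "\<dots> = x m n"
      using y_n segs_comp_deg(2)[OF W(1)[of m] inf_path_arr[OF x mn] W_comp(2)[OF mn]] W(2)[of m]
      by simp
    finally show ?thesis .
  qed
  ultimately have exists: "y \<in> inf_paths G \<and> y dzero ?a = l \<and>
      (\<forall>m n. m \<le> n \<longrightarrow> y (dadd ?a m) (dadd ?a n) = x m n)"
    using y(1) by blast
  show ?thesis
  proof (rule ex1I[of _ y], fact exists)
    fix z assume z: "z \<in> inf_paths G \<and> z dzero ?a = l \<and>
      (\<forall>m n. m \<le> n \<longrightarrow> z (dadd ?a m) (dadd ?a n) = x m n)"
    have same: "z dzero (dadd ?a q) = y dzero (dadd ?a q)" for q
      using prefixed_inf_path_init[of z l x q] prefixed_inf_path_init[of y l x q] z exists by simp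
    show "z = y"
    proof (rule inf_paths_eqI)
      show "z \<in> inf_paths G" "y \<in> inf_paths G"
        using z y(1) by simp_all
      show "\<exists>Q\<ge>q. z dzero Q = y dzero Q" for q
        using same[of q] dadd_upper(2)[of q ?a] by blast
    qed
  qed
qed

lemma prefix_init:
  assumes l: "l \<in> arr G" and x: "x \<in> inf_paths G" and x0: "x dzero dzero = src G l"
  shows "prefix G l x dzero (dadd (deg G l) q) = comp G l (x dzero q)"
proof -
  have "prefix G l x \<in> inf_paths G \<and> prefix G l x dzero (deg G l) = l \<and>
      (\<forall>m n. m \<le> n \<longrightarrow> prefix G l x (dadd (deg G l) m) (dadd (deg G l) n) = x m n)"
    unfolding prefix_def by (rule theI'[OF ex1_prefixed_inf_path[OF assms]])
  then show ?thesis
    using prefixed_inf_path_init[of "prefix G l x" l x q] by blast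
qed

lemma periodic_pair_comp:
  assumes sf: "source_free G" and per: "periodic_pair G l n"
    and e: "e \<in> arr G" "rng G e = src G l" "deg G e = deg G n"
  shows "\<exists>e'\<in>arr G. src G n = rng G e' \<and> comp G l e = comp G n e'"
proof -
  have l: "l \<in> arr G" and n: "n \<in> arr G" and src_ln: "src G l = src G n"
    and prefix_eq: "\<forall>x\<in>Zv G (src G l). prefix G l x = prefix G n x"
    using per unfolding periodic_pair_def by auto
  obtain x where x: "x \<in> inf_paths G" "x dzero (deg G e) = e"
    using extend_to_inf_path[OF sf e(1)] by blast
  have x0: "x dzero dzero = src G l"
    using rng_inf_path[OF x(1), of "deg G e"] x(2) e(2) by simp
  then have "prefix G l x = prefix G n x"
    using prefix_eq x(1) unfolding Zv_def by blast
  then have "comp G l (x dzero (deg G n)) = comp G n (x dzero (deg G l))"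
    using prefix_init[OF l x(1) x0, of "deg G n"] prefix_init[OF n x(1), of "deg G l"] x0 src_ln
    by (simp add: dadd_commute)
  then show ?thesis
    using inf_path_arr[OF x(1), of dzero "deg G l"] rng_inf_path[OF x(1)] x0 src_ln x(2) e(3)
    by (intro bexI[of _ "x dzero (deg G l)"]) auto
qed

end

lemma AE_mem_imp_mem_if_diff_null:
  assumes "A \<in> sets M" "B \<in> sets M" "emeasure M (A - B) = 0"
  shows "AE x in M. x \<in> A \<longrightarrow> x \<in> B"
proof -
  have "A - B \<in> null_sets M"
    using assms by auto
  from AE_not_in[OF this] show ?thesis
    by eventually_elim auto
qed

lemma emeasure_symdiff_eq_0_iff_AE:
  assumes A: "A \<in> sets M" and B: "B \<in> sets M"
  shows "emeasure M (symdiff A B) = 0 \<longleftrightarrow> (AE x in M. x \<in> A \<longleftrightarrow> x \<in> B)"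
proof -
  have S: "symdiff A B \<in> sets M"
    using A B unfolding symdiff_def by auto
  have "{x \<in> space M. \<not> (x \<in> A \<longleftrightarrow> x \<in> B)} = symdiff A B"
    using sets.sets_into_space[OF A] sets.sets_into_space[OF B] unfolding symdiff_def by auto
  from AE_iff_measurable[OF S this] show ?thesis
    by simp
qed

locale lambda_sbfs_space = k_graph G for G :: "('a, 'k::finite) kg" +
  fixes M :: "'x measure" and D :: "'a \<Rightarrow> 'x set" and tau :: "'a \<Rightarrow> 'x \<Rightarrow> 'x"
    and taum :: "('k \<Rightarrow> nat) \<Rightarrow> 'x \<Rightarrow> 'x"
  assumes lambda_sbfs: "lambda_sbfs M G D tau taum"
begin

abbreviation R :: "'a \<Rightarrow> 'x set" where
  "R \<equiv> Rset D tau"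

lemma sets_D: "l \<in> arr G \<Longrightarrow> D l \<in> sets M"
  and sets_tau_image: "l \<in> arr G \<Longrightarrow> A \<in> sets M \<Longrightarrow> A \<subseteq> D l \<Longrightarrow> tau l ` A \<in> sets M"
  and measurable_tau: "l \<in> arr G \<Longrightarrow> tau l \<in> measurable (restrict_space M (D l)) M"
  using lambda_sbfs unfolding lambda_sbfs_def sbfs_deg_def by blast+

lemma tau_density:
  assumes "l \<in> arr G"
  obtains f where "f \<in> borel_measurable M" "AE x in M. x \<in> D l \<longrightarrow> 0 < f x"
    and "\<And>A. A \<in> sets M \<Longrightarrow> A \<subseteq> D l \<Longrightarrow> emeasure M (tau l ` A) = set_nn_integral M A f"
proof -
  have "\<exists>f\<in>borel_measurable M. (AE x in M. x \<in> D l \<longrightarrow> 0 < f x) \<and>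
      (\<forall>A\<in>sets M. A \<subseteq> D l \<longrightarrow> emeasure M (tau l ` A) = set_nn_integral M A f)"
    using lambda_sbfs assms unfolding lambda_sbfs_def sbfs_deg_def by blast
  then show thesis
    using that by blast
qed

lemma sets_R: "l \<in> arr G \<Longrightarrow> R l \<in> sets M"
  unfolding Rset_def using sets_tau_image sets_D by blast

lemma emeasure_R_Int_R:
  "l \<in> arr G \<Longrightarrow> n \<in> arr G \<Longrightarrow> deg G l = deg G n \<Longrightarrow> l \<noteq> n \<Longrightarrow> emeasure M (R l \<inter> R n) = 0"
  using lambda_sbfs unfolding lambda_sbfs_def sbfs_deg_def by metis

lemma emeasure_uncovered: "emeasure M (space M - (\<Union>l\<in>{l \<in> arr G. deg G l = p}. R l)) = 0"
  using lambda_sbfs unfolding lambda_sbfs_def sbfs_deg_def by blast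

lemma tau_vert: "v \<in> vert G \<Longrightarrow> x \<in> D v \<Longrightarrow> tau v x = x"
  using lambda_sbfs unfolding lambda_sbfs_def by blast

lemma emeasure_R_diff_D:
    "l \<in> arr G \<Longrightarrow> n \<in> arr G \<Longrightarrow> rng G n = src G l \<Longrightarrow> emeasure M (R n - D l) = 0"
  and emeasure_symdiff_D_comp:
    "l \<in> arr G \<Longrightarrow> n \<in> arr G \<Longrightarrow> rng G n = src G l \<Longrightarrow> emeasure M (symdiff (D n) (D (comp G l n))) = 0"
  and AE_tau_comp:
    "l \<in> arr G \<Longrightarrow> n \<in> arr G \<Longrightarrow> rng G n = src G l \<Longrightarrow>
      AE x in M. x \<in> D n \<longrightarrow> tau l (tau n x) = tau (comp G l n) x"
  using lambda_sbfs unfolding lambda_sbfs_def by blast+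

lemma null_sets_tau_image:
  assumes l: "l \<in> arr G" and N: "N \<in> null_sets M" "N \<subseteq> D l"
  shows "tau l ` N \<in> null_sets M"
proof -
  obtain f where "\<And>A. A \<in> sets M \<Longrightarrow> A \<subseteq> D l \<Longrightarrow> emeasure M (tau l ` A) = set_nn_integral M A f"
    using tau_density[OF l] by blast
  then have "emeasure M (tau l ` N) = 0"
    using N(2) null_setsD2[OF N(1)] nn_integral_null_set[OF N(1)] by simp
  then show ?thesis
    using sets_tau_image[OF l _ N(2)] N(1) by auto
qed

lemma null_sets_tau_preimage:
  assumes l: "l \<in> arr G" and N: "N \<in> null_sets M"
  shows "tau l -` N \<inter> D l \<in> null_sets M"
proof -
  obtain f where f: "f \<in> borel_measurable M" "AE x in M. x \<in> D l \<longrightarrow> 0 < f x"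
    and image: "\<And>A. A \<in> sets M \<Longrightarrow> A \<subseteq> D l \<Longrightarrow> emeasure M (tau l ` A) = set_nn_integral M A f"
    using tau_density[OF l] by blast
  let ?A = "tau l -` N \<inter> D l"
  have D: "D l \<in> sets M"
    using sets_D[OF l] .
  have "tau l -` N \<inter> space (restrict_space M (D l)) \<in> sets (restrict_space M (D l))"
    using measurable_sets[OF measurable_tau[OF l]] N by auto
  moreover have "space (restrict_space M (D l)) = D l"
    using sets.sets_into_space[OF D] by (auto simp: space_restrict_space)
  ultimately have A: "?A \<in> sets M"
    using sets_restrict_space_iff[of "D l" M] D sets.sets_into_space[OF D] by (metis Int_absorb2)
  have "tau l ` ?A \<subseteq> N"
    by blast
  then have "tau l ` ?A \<in> null_sets M"
    by (rule null_sets_subset[OF N sets_tau_image[OF l A Int_lower2]])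
  then have "emeasure M (tau l ` ?A) = 0"
    by (rule null_setsD1)
  then have "set_nn_integral M ?A f = 0"
    using image[OF A Int_lower2] by simp
  then have "AE x in M. f x * indicator ?A x = 0"
    using nn_integral_0_iff_AE[of "\<lambda>x. f x * indicator ?A x" M] f(1) A by auto
  then have "AE x in M. x \<notin> ?A"
    using f(2) by eventually_elim (auto simp: indicator_def)
  then show ?thesis
    using AE_iff_null_sets[OF A] by blast
qed

lemma AE_R_if_AE_D:
  assumes l: "l \<in> arr G" and P: "AE x in M. x \<in> D l \<longrightarrow> P x"
  shows "AE y in M. y \<in> R l \<longrightarrow> (\<exists>x\<in>D l. P x \<and> y = tau l x)"
proof -
  obtain N where N: "{x \<in> space M. \<not> (x \<in> D l \<longrightarrow> P x)} \<subseteq> N" "N \<in> null_sets M"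
    using P by (auto elim!: AE_E)
  have "tau l ` (N \<inter> D l) \<in> null_sets M"
    using null_sets_tau_image[OF l null_set_Int2[OF N(2) sets_D[OF l]]] by blast
  from AE_not_in[OF this] show ?thesis
  proof eventually_elim
    case (elim y)
    show ?case
    proof
      assume "y \<in> R l"
      then obtain x where x: "x \<in> D l" "y = tau l x"
        unfolding Rset_def by blast
      then have "x \<in> space M" "x \<notin> N"
        using elim sets.sets_into_space[OF sets_D[OF l]] by auto
      then show "\<exists>x\<in>D l. P x \<and> y = tau l x"
        using N(1) x by blast
    qed
  qed
qed

lemma AE_D_if_AE_R:
  assumes l: "l \<in> arr G" and Q: "AE y in M. y \<in> R l \<longrightarrow> Q y"
  shows "AE x in M. x \<in> D l \<longrightarrow> Q (tau l x)"
proof -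
  obtain N where N: "{y \<in> space M. \<not> (y \<in> R l \<longrightarrow> Q y)} \<subseteq> N" "N \<in> null_sets M"
    using Q by (auto elim!: AE_E)
  from AE_not_in[OF null_sets_tau_preimage[OF l N(2)]] show ?thesis
  proof eventually_elim
    case (elim x)
    show ?case
    proof
      assume x: "x \<in> D l"
      then have "tau l x \<in> R l"
        unfolding Rset_def by blast
      moreover have "tau l x \<in> space M" "tau l x \<notin> N"
        using calculation sets.sets_into_space[OF sets_R[OF l]] elim x by auto
      ultimately show "Q (tau l x)"
        using N(1) by blast
    qed
  qed
qed

lemma AE_D_comp_iff:
  assumes l: "l \<in> arr G" and n: "n \<in> arr G" and ln: "rng G n = src G l"
  shows "AE x in M. x \<in> D n \<longleftrightarrow> x \<in> D (comp G l n)"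
  using emeasure_symdiff_eq_0_iff_AE[OF sets_D[OF n] sets_D[OF comp_in_arr[OF l n ln[symmetric]]]]
    emeasure_symdiff_D_comp[OF l n ln] by blast

lemma AE_tau_in_D:
  assumes l: "l \<in> arr G" and n: "n \<in> arr G" and ln: "rng G n = src G l"
  shows "AE x in M. x \<in> D n \<longrightarrow> tau n x \<in> D l"
  using AE_D_if_AE_R[OF n AE_mem_imp_mem_if_diff_null[OF sets_R[OF n] sets_D[OF l] emeasure_R_diff_D[OF l n ln]]] .

lemma AE_R_comp_subset:
  assumes l: "l \<in> arr G" and n: "n \<in> arr G" and ln: "rng G n = src G l"
  shows "AE y in M. y \<in> R (comp G l n) \<longrightarrow> y \<in> R l"
proof -
  have "AE x in M. x \<in> D (comp G l n) \<longrightarrow> tau (comp G l n) x \<in> R l"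
    using AE_D_comp_iff[OF l n ln] AE_tau_comp[OF l n ln] AE_tau_in_D[OF l n ln]
    by eventually_elim (metis Rset_def imageI)
  from AE_R_if_AE_D[OF comp_in_arr[OF l n ln[symmetric]] this] show ?thesis
    by eventually_elim blast
qed

lemma AE_tau_R_comp:
  assumes l: "l \<in> arr G" and e: "e \<in> arr G" and le: "rng G e = src G l"
  shows "AE y in M. y \<in> R e \<longrightarrow> tau l y \<in> R (comp G l e)"
proof -
  have "AE x in M. x \<in> D e \<longrightarrow> tau l (tau e x) \<in> R (comp G l e)"
    using AE_D_comp_iff[OF l e le] AE_tau_comp[OF l e le]
    by eventually_elim (metis Rset_def imageI)
  from AE_R_if_AE_D[OF e this] show ?thesis
    by eventually_elim blast
qed

lemma R_vert: "v \<in> vert G \<Longrightarrow> R v = D v"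
  unfolding Rset_def using tau_vert by (auto simp: image_iff)

lemma AE_D_subset_R_src:
  assumes l: "l \<in> arr G"
  shows "AE x in M. x \<in> D l \<longrightarrow> x \<in> R (src G l)"
proof -
  have s: "src G l \<in> vert G"
    using src_in_vert[OF l] .
  have "AE x in M. x \<in> D (src G l) \<longleftrightarrow> x \<in> D l"
    using AE_D_comp_iff[OF l vert_in_arr[OF s]] s l by simp
  then show ?thesis
    by eventually_elim (simp add: R_vert[OF s])
qed

lemma AE_R_subset_R_rng: "AE x in M. \<forall>e\<in>arr G. x \<in> R e \<longrightarrow> x \<in> R (rng G e)"
proof (rule AE_ball_countable'[OF _ countable_arr])
  fix e assume e: "e \<in> arr G"
  have r: "rng G e \<in> vert G"
    using rng_in_vert[OF e] .
  show "AE x in M. x \<in> R e \<longrightarrow> x \<in> R (rng G e)"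
    using AE_R_comp_subset[of "rng G e" e] vert_in_arr[OF r] r e by simp
qed

lemma AE_R_vert_unique:
  assumes w: "w \<in> vert G"
  shows "AE x in M. x \<in> R w \<longrightarrow> (\<forall>v\<in>vert G. x \<in> R v \<longrightarrow> v = w)"
proof -
  have "AE x in M. \<forall>v\<in>vert G. v \<noteq> w \<longrightarrow> x \<notin> R v \<inter> R w"
  proof (rule AE_ball_countable'[OF _ countable_subset[OF vert_subset_arr countable_arr]])
    fix v assume v: "v \<in> vert G"
    show "AE x in M. v \<noteq> w \<longrightarrow> x \<notin> R v \<inter> R w"
    proof (cases "v = w")
      case False
      then have "R v \<inter> R w \<in> null_sets M"
        using emeasure_R_Int_R[of v w] v w vert_in_arr deg_vert sets_R by auto
      from AE_not_in[OF this] show ?thesis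
        by auto
    qed simp
  qed
  then show ?thesis
    by eventually_elim blast
qed

lemma AE_covered_by_deg: "AE x in M. \<exists>e\<in>arr G. deg G e = p \<and> x \<in> R e"
proof -
  have "countable {e \<in> arr G. deg G e = p}"
    using countable_subset[OF _ countable_arr] by auto
  then have "(\<Union>e\<in>{e \<in> arr G. deg G e = p}. R e) \<in> sets M"
    by (rule sets.countable_UN'') (use sets_R in auto)
  from AE_mem_imp_mem_if_diff_null[OF sets.top this emeasure_uncovered] AE_space show ?thesis
    by eventually_elim blast
qed

lemma AE_D_covered:
  assumes l: "l \<in> arr G"
  shows "AE x in M. x \<in> D l \<longrightarrow> (\<exists>e\<in>arr G. rng G e = src G l \<and> deg G e = p \<and> x \<in> R e)"
  using AE_D_subset_R_src[OF l] AE_covered_by_deg[of p] AE_R_subset_R_rng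
    AE_R_vert_unique[OF src_in_vert[OF l]]
proof eventually_elim
  case (elim x)
  show ?case
  proof
    assume "x \<in> D l"
    then obtain e where e: "e \<in> arr G" "deg G e = p" "x \<in> R e" "x \<in> R (src G l)"
      using elim by blast
    then have "rng G e = src G l"
      using elim rng_in_vert by blast
    then show "\<exists>e\<in>arr G. rng G e = src G l \<and> deg G e = p \<and> x \<in> R e"
      using e by blast
  qed
qed

lemma AE_R_subset_if_periodic:
  assumes sf: "source_free G" and per: "periodic_pair G l n"
  shows "AE y in M. y \<in> R l \<longrightarrow> y \<in> R n"
proof -
  have l: "l \<in> arr G" and n: "n \<in> arr G"
    using per unfolding periodic_pair_def by auto
  define E where "E = {e \<in> arr G. rng G e = src G l \<and> deg G e = deg G n}"
  have E: "countable E"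
    using countable_subset[OF _ countable_arr] unfolding E_def by auto
  have tau_E: "AE x in M. \<forall>e\<in>E. x \<in> R e \<longrightarrow> tau l x \<in> R (comp G l e)"
    by (rule AE_ball_countable'[OF _ E]) (use AE_tau_R_comp[OF l] in \<open>auto simp: E_def\<close>)
  have E_n: "AE y in M. \<forall>e\<in>E. y \<in> R (comp G l e) \<longrightarrow> y \<in> R n"
  proof (rule AE_ball_countable'[OF _ E])
    fix e assume "e \<in> E"
    then have "e \<in> arr G" "rng G e = src G l" "deg G e = deg G n"
      unfolding E_def by auto
    then obtain e' where e': "e' \<in> arr G" "rng G e' = src G n" "comp G l e = comp G n e'"
      using periodic_pair_comp[OF sf per] by metis
    show "AE y in M. y \<in> R (comp G l e) \<longrightarrow> y \<in> R n"
      using AE_R_comp_subset[OF n e'(1,2)] e'(3) by simp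
  qed
  have "AE x in M. x \<in> D l \<longrightarrow> (\<exists>e\<in>E. tau l x \<in> R (comp G l e))"
    using AE_D_covered[OF l, of "deg G n"] tau_E by eventually_elim (auto simp: E_def)
  from AE_R_if_AE_D[OF l this] E_n show ?thesis
    by eventually_elim blast
qed

end

theorem proposition4p12:
  fixes G :: "('a, 'k::finite) kg" and M :: "'x measure"
    and D :: "'a \<Rightarrow> 'x set" and tau :: "'a \<Rightarrow> 'x \<Rightarrow> 'x"
    and taum :: "('k \<Rightarrow> nat) \<Rightarrow> 'x \<Rightarrow> 'x" and l n :: 'a
  assumes "kgraph G" and "row_finite G" and "source_free G"
    and "lambda_sbfs M G D tau taum"
    and "periodic_pair G l n"
  shows "emeasure M (symdiff (Rset D tau l) (Rset D tau n)) = 0"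
proof -
  interpret lambda_sbfs_space G M D tau taum
    by unfold_locales (fact assms)+
  have l: "l \<in> arr G" and n: "n \<in> arr G"
    using assms(5) unfolding periodic_pair_def by auto
  have per': "periodic_pair G n l"
    using assms(5) unfolding periodic_pair_def by metis
  have "AE x in M. x \<in> R l \<longleftrightarrow> x \<in> R n"
    using AE_R_subset_if_periodic[OF assms(3,5)] AE_R_subset_if_periodic[OF assms(3) per']
    by eventually_elim blast
  then show ?thesis
    using emeasure_symdiff_eq_0_iff_AE[OF sets_R[OF l] sets_R[OF n]] by simp
qed

end
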